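(* Let $\vec H$ be a DAG. Then there exist graphs $H_1,H_2\in\mathcal G_{\vec H}$ such that $\mathrm{td}(H_1)\le \mathrm{dtd}(\vec H)\le \mathrm{td}(H_2)$.
   Context: For a DAG $\vec H$, a source is a vertex of in-degree $0$; $S$ denotes the set of sources and $N$ the set of non-sources; $R(s)$ is the set of vertices reachable from $s$. $\mathrm{Bip}(\vec H)$ is the bipartite graph with parts $S$ and $N$ in which $s\in S$ and $v\in N$ are adjacent iff $v\in R(s)$. $\mathcal G_{\vec H}$ is the set of all graphs obtained from $\mathrm{Bip}(\vec H)$ by contracting, for each non-source $v$, one edge incident to $v$ (so that all non-sources are eliminated and the resulting graph has vertex set $S$). Equivalently, for a choice of map $f:N\to S$ with $v\in R(f(v))$, the graph has vertex set $S$ and distinct $s,s'$ adjacent iff there is $v\in N$ with $v\in R(s)\cap R(s')$ and $f(v)\in\{s,s'\}$. A DAG elimination forest of $\vec H$ is defined recursively: if $\vec H$ is empty, it is empty; if the underlying undirected graph is disconnected, it is the union of DAG elimination forests of its components; if connected with exactly one source $s$, it is the single-node tree $s$; otherwise it is a tree whose root is an arbitrarily chosen source $s$ and whose subtrees are the trees of a DAG elimination forest of the DAG obtained by deleting $s$ and all vertices reachable from $s$. The depth of a rooted forest is the maximum number of nodes on a root-to-leaf path; $\mathrm{dtd}(\vec H)$ is the minimum depth of a DAG elimination forest. $\mathrm{td}$ denotes the usual treedepth of an undirected graph. *)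

theory Defs
  imports Main
begin

text \<open>Digraphs are pairs (V, E) with a vertex set V and arcs E, where (u,v) \<in> E means u -> v.
  Undirected graphs are pairs (V, E) with E a symmetric irreflexive relation on V.\<close>

definition dag :: "'a set \<Rightarrow> ('a \<times> 'a) set \<Rightarrow> bool" where
  "dag V E \<longleftrightarrow> finite V \<and> E \<subseteq> V \<times> V \<and> acyclic E"

definition sources :: "'a set \<Rightarrow> ('a \<times> 'a) set \<Rightarrow> 'a set" where
  "sources V E = {v \<in> V. \<not> (\<exists>u. (u, v) \<in> E)}"

definition nonsources :: "'a set \<Rightarrow> ('a \<times> 'a) set \<Rightarrow> 'a set" where
  "nonsources V E = V - sources V E"

definition reach :: "('a \<times> 'a) set \<Rightarrow> 'a \<Rightarrow> 'a set" where
  "reach E s = E\<^sup>* `` {s}"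

definition induced :: "('a \<times> 'a) set \<Rightarrow> 'a set \<Rightarrow> ('a \<times> 'a) set" where
  "induced E C = E \<inter> (C \<times> C)"

definition und :: "'a set \<Rightarrow> ('a \<times> 'a) set \<Rightarrow> ('a \<times> 'a) set" where
  "und V E = {(x, y). x \<in> V \<and> y \<in> V \<and> ((x, y) \<in> E \<or> (y, x) \<in> E)}"

definition comps :: "'a set \<Rightarrow> ('a \<times> 'a) set \<Rightarrow> 'a set set" where
  "comps V E = {(und V E)\<^sup>* `` {v} | v. v \<in> V}"

definition gconnected :: "'a set \<Rightarrow> ('a \<times> 'a) set \<Rightarrow> bool" where
  "gconnected V E \<longleftrightarrow> V \<noteq> {} \<and> (\<forall>x\<in>V. \<forall>y\<in>V. (x, y) \<in> (und V E)\<^sup>*)"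

inductive dag_elim_depth :: "'a set \<Rightarrow> ('a \<times> 'a) set \<Rightarrow> nat \<Rightarrow> bool" where
  empty: "V = {} \<Longrightarrow> dag_elim_depth V E 0"
| disconnected: "\<lbrakk> V \<noteq> {}; \<not> gconnected V E;
     \<forall>C. C \<in> comps V E \<longrightarrow> dag_elim_depth C (induced E C) (d C) \<rbrakk>
   \<Longrightarrow> dag_elim_depth V E (Max (d ` comps V E))"
| one_source: "\<lbrakk> gconnected V E; sources V E = {s} \<rbrakk> \<Longrightarrow> dag_elim_depth V E 1"
| root: "\<lbrakk> gconnected V E; \<not> (\<exists>t. sources V E = {t}); s \<in> sources V E;
     dag_elim_depth (V - reach E s) (induced E (V - reach E s)) d \<rbrakk>
   \<Longrightarrow> dag_elim_depth V E (Suc d)"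

definition dtd :: "'a set \<Rightarrow> ('a \<times> 'a) set \<Rightarrow> nat" where
  "dtd V E = (LEAST d. dag_elim_depth V E d)"

inductive td_depth :: "'a set \<Rightarrow> ('a \<times> 'a) set \<Rightarrow> nat \<Rightarrow> bool" where
  empty: "V = {} \<Longrightarrow> td_depth V E 0"
| disconnected: "\<lbrakk> V \<noteq> {}; \<not> gconnected V E;
     \<forall>C. C \<in> comps V E \<longrightarrow> td_depth C (induced E C) (d C) \<rbrakk>
   \<Longrightarrow> td_depth V E (Max (d ` comps V E))"
| connected: "\<lbrakk> gconnected V E; v \<in> V;
     td_depth (V - {v}) (induced E (V - {v})) d \<rbrakk>
   \<Longrightarrow> td_depth V E (Suc d)"

definition td :: "'a set \<Rightarrow> ('a \<times> 'a) set \<Rightarrow> nat" where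
  "td V E = (LEAST d. td_depth V E d)"

definition contraction_graphs :: "'a set \<Rightarrow> ('a \<times> 'a) set \<Rightarrow> ('a \<times> 'a) set set" where
  "contraction_graphs V E =
     {{(s, s'). s \<in> sources V E \<and> s' \<in> sources V E \<and> s \<noteq> s' \<and>
         (\<exists>v \<in> nonsources V E. v \<in> reach E s \<and> v \<in> reach E s' \<and> f v \<in> {s, s'})}
      | f. \<forall>v \<in> nonsources V E. f v \<in> sources V E \<and> v \<in> reach E (f v)}"

end

theory Submission
  imports Defs
begin

(*
  Both parameters are characterised by vertex rankings: labellings of the vertices by numbers
  below k in which every connected vertex set has a unique vertex of maximal label.  A graph has
  treedepth at most k iff it has a vertex ranking below k: the root of an elimination tree gets
  the top label.  Likewise dtd(H) <= k iff for some contraction map f (sending each non-source to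
  a source reaching it) the contraction graph H_f on the sources has a vertex ranking below k.
  Given an elimination forest with root s, let f send everything reachable from s to s; then
  H_f without s is the contraction graph of H - R(s) and s may take the top label.  Conversely,
  if H is connected then so is H_f, and its top-labelled source can serve as the root.
  For f coming from an optimal elimination forest this gives td(H_f) = dtd(H).
*)

definition component :: "'a set \<Rightarrow> ('a \<times> 'a) set \<Rightarrow> 'a \<Rightarrow> 'a set" where
  "component V E x = (und V E)\<^sup>* `` {x}"

lemma comps_eq_component_image: "comps V E = component V E ` V"
  unfolding comps_def component_def by auto

lemma finite_comps: "finite V \<Longrightarrow> finite (comps V E)"
  by (simp add: comps_eq_component_image)

lemma component_self: "x \<in> component V E x"
  unfolding component_def by simp

lemma component_in_comps: "x \<in> V \<Longrightarrow> component V E x \<in> comps V E"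
  by (simp add: comps_eq_component_image)

lemma compsE:
  assumes "C \<in> comps V E"
  obtains x where "x \<in> V" "C = component V E x"
  using assms by (auto simp: comps_eq_component_image)

lemma sym_und: "sym (und V E)"
  unfolding und_def sym_def by auto

lemma und_rtrancl_sym: "(x, y) \<in> (und V E)\<^sup>* \<Longrightarrow> (y, x) \<in> (und V E)\<^sup>*"
  using sym_rtrancl[OF sym_und] by (rule symD)

lemma component_subset:
  assumes "x \<in> V"
  shows "component V E x \<subseteq> V"
proof -
  have "und V E `` V \<subseteq> V"
    unfolding und_def by auto
  then have "(und V E)\<^sup>* `` V = V"
    by (rule Image_closed_trancl)
  then show ?thesis
    using assms unfolding component_def by blast
qed

lemma comps_subset: "C \<in> comps V E \<Longrightarrow> C \<subseteq> V"
  by (metis compsE component_subset)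

lemma component_eq:
  assumes "y \<in> component V E x"
  shows "component V E y = component V E x"
proof -
  have xy: "(x, y) \<in> (und V E)\<^sup>*" and yx: "(y, x) \<in> (und V E)\<^sup>*"
    using assms und_rtrancl_sym unfolding component_def by auto
  show ?thesis
    unfolding component_def
    using rtrancl_trans[OF xy] rtrancl_trans[OF yx] by (meson Image_singleton_iff subsetI subset_antisym)
qed

lemma component_psubset:
  assumes "\<not> gconnected V E" "x \<in> V"
  shows "component V E x \<subset> V"
proof -
  have "component V E x \<noteq> V"
  proof
    assume all: "component V E x = V"
    have "(a, b) \<in> (und V E)\<^sup>*" if "a \<in> V" "b \<in> V" for a b
    proof -
      have "(x, a) \<in> (und V E)\<^sup>*" "(x, b) \<in> (und V E)\<^sup>*"
        using that all unfolding component_def by auto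
      then show ?thesis
        by (meson und_rtrancl_sym rtrancl_trans)
    qed
    then show False
      using assms unfolding gconnected_def by blast
  qed
  then show ?thesis
    using component_subset[OF assms(2)] by blast
qed

lemma gconnected_mono:
  assumes "gconnected X H" "\<And>a b. a \<in> X \<Longrightarrow> b \<in> X \<Longrightarrow> (a, b) \<in> H \<Longrightarrow> (a, b) \<in> H'"
  shows "gconnected X H'"
proof -
  have "und X H \<subseteq> und X H'"
    using assms(2) unfolding und_def by blast
  then show ?thesis
    using assms(1) rtrancl_mono unfolding gconnected_def by blast
qed

lemma gconnected_induced: "gconnected X H \<Longrightarrow> X \<subseteq> C \<Longrightarrow> gconnected X (induced H C)"
  by (erule gconnected_mono) (auto simp: induced_def)

lemma gconnected_subset_component:
  assumes "gconnected X H" "x \<in> X"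
    and "\<And>a b. a \<in> X \<Longrightarrow> b \<in> X \<Longrightarrow> (a, b) \<in> H \<Longrightarrow> (a, b) \<in> (und V E)\<^sup>*"
  shows "X \<subseteq> component V E x"
proof
  fix y assume "y \<in> X"
  then have "(x, y) \<in> (und X H)\<^sup>*"
    using assms(1,2) unfolding gconnected_def by blast
  moreover have "und X H \<subseteq> (und V E)\<^sup>*"
  proof
    fix p assume "p \<in> und X H"
    then obtain a b where "p = (a, b)" "a \<in> X" "b \<in> X" "(a, b) \<in> H \<or> (b, a) \<in> H"
      unfolding und_def by auto
    then show "p \<in> (und V E)\<^sup>*"
      by (metis assms(3) und_rtrancl_sym)
  qed
  ultimately have "(x, y) \<in> (und V E)\<^sup>*"
    by (meson rtrancl_subset_rtrancl subsetD)
  then show "y \<in> component V E x"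
    unfolding component_def by simp
qed

section \<open>Vertex rankings and treedepth\<close>

definition vertex_ranking :: "'a set \<Rightarrow> ('a \<times> 'a) set \<Rightarrow> ('a \<Rightarrow> nat) \<Rightarrow> nat \<Rightarrow> bool" where
  "vertex_ranking S H l k \<longleftrightarrow> (\<forall>x\<in>S. l x < k) \<and>
     (\<forall>X\<subseteq>S. gconnected X H \<longrightarrow> (\<exists>x\<in>X. \<forall>y\<in>X. y \<noteq> x \<longrightarrow> l y < l x))"

lemma vertex_ranking_mono:
  assumes "vertex_ranking S H l k" "S' \<subseteq> S" "H' \<subseteq> H" "k \<le> k'"
  shows "vertex_ranking S' H' l k'"
proof -
  have "gconnected X H" if "gconnected X H'" for X
    using that by (rule gconnected_mono) (use assms(3) in blast)
  with assms show ?thesis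
    unfolding vertex_ranking_def by (meson order_less_le_trans subset_trans subsetD)
qed

lemma vertex_ranking_inj:
  assumes "finite S" "inj_on l S" "\<forall>x\<in>S. l x < k"
  shows "vertex_ranking S H l k"
  unfolding vertex_ranking_def
proof (intro conjI allI impI)
  fix X assume "X \<subseteq> S" "gconnected X H"
  then have "finite (l ` X)" "l ` X \<noteq> {}"
    using finite_subset[OF _ assms(1)] unfolding gconnected_def by auto
  then obtain x where x: "x \<in> X" "l x = Max (l ` X)"
    by (metis Max_in imageE)
  have "l y < l x" if "y \<in> X" "y \<noteq> x" for y
    using Max_ge[OF \<open>finite (l ` X)\<close>] inj_onD[OF assms(2)] that x \<open>X \<subseteq> S\<close>
    by (metis image_eqI le_neq_implies_less subsetD)
  with x(1) show "\<exists>x\<in>X. \<forall>y\<in>X. y \<noteq> x \<longrightarrow> l y < l x"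
    by blast
qed (use assms(3) in blast)

lemma ex_vertex_ranking: "finite S \<Longrightarrow> \<exists>l. vertex_ranking S H l (card S)"
  using ex_bij_betw_finite_nat[of S] vertex_ranking_inj[of S]
  by (metis atLeastLessThan_iff bij_betw_apply bij_betw_imp_inj_on)

lemma vertex_ranking_top:
  assumes "vertex_ranking S H l k" "gconnected S H"
  obtains w where "w \<in> S" "l w < k" "vertex_ranking (S - {w}) H l (l w)"
proof -
  obtain w where w: "w \<in> S" "\<forall>y\<in>S. y \<noteq> w \<longrightarrow> l y < l w"
    using assms unfolding vertex_ranking_def by blast
  moreover have "vertex_ranking (S - {w}) H l (l w)"
    using assms(1) w(2) unfolding vertex_ranking_def by blast
  ultimately show ?thesis
    using assms(1) that unfolding vertex_ranking_def by blast
qed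

lemma vertex_ranking_extend:
  assumes "vertex_ranking (S - {v}) H' l d"
    and "\<And>X. X \<subseteq> S - {v} \<Longrightarrow> gconnected X H \<Longrightarrow> gconnected X H'"
  shows "vertex_ranking S H (l(v := d)) (Suc d)"
proof -
  have below: "l x < d" if "x \<in> S - {v}" for x
    using assms(1) that unfolding vertex_ranking_def by blast
  have "\<exists>x\<in>X. \<forall>y\<in>X. y \<noteq> x \<longrightarrow> (l(v := d)) y < (l(v := d)) x"
    if X: "X \<subseteq> S" "gconnected X H" for X
  proof (cases "v \<in> X")
    case True
    then show ?thesis
      using below X(1) by (intro bexI[of _ v]) auto
  next
    case False
    then have "X \<subseteq> S - {v}"
      using X(1) by blast
    then obtain x where "x \<in> X" "\<forall>y\<in>X. y \<noteq> x \<longrightarrow> l y < l x"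
      using assms X(2) unfolding vertex_ranking_def by blast
    then show ?thesis
      using False by (intro bexI[of _ x]) auto
  qed
  moreover have "(l(v := d)) x < Suc d" if "x \<in> S" for x
    using below that by (cases "x = v") (auto simp: less_SucI)
  ultimately show ?thesis
    unfolding vertex_ranking_def by blast
qed

lemma vertex_ranking_components:
  assumes "S \<subseteq> V"
    and ranking: "\<And>C. C \<in> comps V E \<Longrightarrow> vertex_ranking (S \<inter> C) (H' C) (L C) k"
    and connected: "\<And>X x. X \<subseteq> S \<Longrightarrow> gconnected X H \<Longrightarrow> x \<in> X \<Longrightarrow>
      X \<subseteq> component V E x \<and> gconnected X (H' (component V E x))"
  shows "vertex_ranking S H (\<lambda>x. L (component V E x) x) k"
  unfolding vertex_ranking_def
proof (intro conjI allI impI ballI)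
  fix x assume "x \<in> S"
  then have "component V E x \<in> comps V E" "x \<in> S \<inter> component V E x"
    using assms(1) component_self by (auto simp: comps_eq_component_image)
  then show "L (component V E x) x < k"
    using ranking unfolding vertex_ranking_def by blast
next
  fix X assume X: "X \<subseteq> S" "gconnected X H"
  then obtain x0 where "x0 \<in> X"
    unfolding gconnected_def by blast
  let ?C = "component V E x0"
  have "X \<subseteq> S \<inter> ?C" "gconnected X (H' ?C)"
    using connected[OF X \<open>x0 \<in> X\<close>] X(1) by auto
  moreover have "?C \<in> comps V E"
    using \<open>x0 \<in> X\<close> X(1) assms(1) by (auto simp: comps_eq_component_image)
  ultimately obtain x where x: "x \<in> X" "\<forall>y\<in>X. y \<noteq> x \<longrightarrow> L ?C y < L ?C x"
    using ranking unfolding vertex_ranking_def by blast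
  have same: "component V E y = ?C" if "y \<in> X" for y
    using \<open>X \<subseteq> S \<inter> ?C\<close> that by (intro component_eq) blast
  show "\<exists>x\<in>X. \<forall>y\<in>X. y \<noteq> x \<longrightarrow> L (component V E y) y < L (component V E x) x"
    using x same by (intro bexI[of _ x]) simp_all
qed

lemma vertex_ranking_induced_components:
  assumes "\<And>C. C \<in> comps V H \<Longrightarrow> vertex_ranking C (induced H C) (L C) k"
  shows "vertex_ranking V H (\<lambda>x. L (component V H x) x) k"
proof (rule vertex_ranking_components[where H' = "\<lambda>C. induced H C"])
  fix C assume C: "C \<in> comps V H"
  then show "vertex_ranking (V \<inter> C) (induced H C) (L C) k"
    using assms[OF C] comps_subset[OF C] by (simp add: Int_absorb1)
next
  fix X x assume X: "X \<subseteq> V" "gconnected X H" "x \<in> X"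
  have "X \<subseteq> component V H x"
    using X by (intro gconnected_subset_component[OF X(2,3)]) (auto simp: und_def)
  then show "X \<subseteq> component V H x \<and> gconnected X (induced H (component V H x))"
    using gconnected_induced[OF X(2)] by blast
qed simp

lemma td_depth_components_le:
  assumes "finite V" "V \<noteq> {}" "\<not> gconnected V H"
    and "\<And>C. C \<in> comps V H \<Longrightarrow> \<exists>d\<le>k. td_depth C (induced H C) d"
  shows "\<exists>d\<le>k. td_depth V H d"
proof -
  obtain d where d: "\<And>C. C \<in> comps V H \<Longrightarrow> d C \<le> k \<and> td_depth C (induced H C) (d C)"
    using assms(4) by metis
  then have "td_depth V H (Max (d ` comps V H))"
    using td_depth.disconnected[OF assms(2,3)] by blast
  moreover have "Max (d ` comps V H) \<le> k"
    using d assms(1,2) by (simp add: comps_eq_component_image)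
  ultimately show ?thesis
    by blast
qed

lemma td_depth_imp_vertex_ranking:
  assumes "td_depth V H d" "finite V"
  shows "\<exists>l. vertex_ranking V H l d"
  using assms
proof (induction rule: td_depth.induct)
  case (empty V H)
  then show ?case
    unfolding vertex_ranking_def gconnected_def by auto
next
  case (disconnected V H d)
  have "\<exists>l. vertex_ranking C (induced H C) l (Max (d ` comps V H))" if C: "C \<in> comps V H" for C
  proof -
    have "finite C"
      using comps_subset[OF C] disconnected.prems by (rule finite_subset)
    then obtain l where "vertex_ranking C (induced H C) l (d C)"
      using disconnected.IH C by blast
    moreover have "d C \<le> Max (d ` comps V H)"
      using C finite_comps[OF disconnected.prems] by simp
    ultimately show ?thesis
      by (blast intro: vertex_ranking_mono[OF _ subset_refl subset_refl])
  qed
  then obtain L where "\<And>C. C \<in> comps V H \<Longrightarrow> vertex_ranking C (induced H C) (L C) (Max (d ` comps V H))"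
    by metis
  then show ?case
    using vertex_ranking_induced_components by blast
next
  case (connected V H v d)
  then obtain l where "vertex_ranking (V - {v}) (induced H (V - {v})) l d"
    by auto
  then have "vertex_ranking V H (l(v := d)) (Suc d)"
    by (rule vertex_ranking_extend) (rule gconnected_induced)
  then show ?case
    by blast
qed

lemma vertex_ranking_imp_td_depth:
  assumes "finite V" "vertex_ranking V H l k"
  shows "\<exists>d\<le>k. td_depth V H d"
  using assms
proof (induction "card V" arbitrary: V H k rule: less_induct)
  case less
  consider "V = {}" | "V \<noteq> {}" "\<not> gconnected V H" | "gconnected V H"
    by blast
  then show ?case
  proof cases
    case 1
    then show ?thesis
      using td_depth.empty by blast
  next
    case 2
    show ?thesis
    proof (rule td_depth_components_le[OF less.prems(1) 2])
      fix C assume "C \<in> comps V H"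
      then obtain x where "x \<in> V" "C = component V H x"
        by (rule compsE)
      then have "C \<subset> V"
        using component_psubset[OF 2(2)] by simp
      moreover have "vertex_ranking C (induced H C) l k"
        using \<open>C \<subset> V\<close> by (intro vertex_ranking_mono[OF less.prems(2)]) (auto simp: induced_def)
      moreover have "card C < card V" "finite C"
        using \<open>C \<subset> V\<close> less.prems(1) by (auto intro: psubset_card_mono finite_subset)
      ultimately show "\<exists>d\<le>k. td_depth C (induced H C) d"
        using less.hyps by blast
    qed
  next
    case 3
    obtain w where w: "w \<in> V" "l w < k" "vertex_ranking (V - {w}) H l (l w)"
      using vertex_ranking_top[OF less.prems(2) 3] .
    have "vertex_ranking (V - {w}) (induced H (V - {w})) l (l w)"
      by (rule vertex_ranking_mono[OF w(3)]) (auto simp: induced_def)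
    moreover have "card (V - {w}) < card V" "finite (V - {w})"
      using card_Diff1_less[OF less.prems(1) w(1)] less.prems(1) by auto
    ultimately obtain d where "d \<le> l w" "td_depth (V - {w}) (induced H (V - {w})) d"
      using less.hyps by blast
    then show ?thesis
      using td_depth.connected[OF 3 w(1)] w(2) by (intro exI[of _ "Suc d"]) auto
  qed
qed

lemma td_le_vertex_ranking: "finite V \<Longrightarrow> vertex_ranking V H l k \<Longrightarrow> td V H \<le> k"
  unfolding td_def by (metis vertex_ranking_imp_td_depth Least_le le_trans)

lemma ex_vertex_ranking_td: "finite V \<Longrightarrow> \<exists>l. vertex_ranking V H l (td V H)"
  unfolding td_def
  by (metis ex_vertex_ranking vertex_ranking_imp_td_depth LeastI td_depth_imp_vertex_ranking)

definition pred_closed :: "'a set \<Rightarrow> ('a \<times> 'a) set \<Rightarrow> bool" where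
  "pred_closed D E \<longleftrightarrow> (\<forall>u v. (u, v) \<in> E \<longrightarrow> v \<in> D \<longrightarrow> u \<in> D)"

lemma rtrancl_induced_pred_closed:
  assumes "(u, v) \<in> E\<^sup>*" "pred_closed D E" "v \<in> D"
  shows "u \<in> D \<and> (u, v) \<in> (induced E D)\<^sup>*"
  using assms(1)
proof (induction rule: converse_rtrancl_induct)
  case base
  then show ?case using assms(3) by simp
next
  case (step u w)
  then have "u \<in> D"
    using assms(2) unfolding pred_closed_def by blast
  with step have "(u, w) \<in> induced E D"
    unfolding induced_def by simp
  with step \<open>u \<in> D\<close> show ?case
    by (meson converse_rtrancl_into_rtrancl)
qed

lemma rtrancl_induced_subset: "(u, v) \<in> (induced E D)\<^sup>* \<Longrightarrow> (u, v) \<in> E\<^sup>*"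
  unfolding induced_def using rtrancl_mono[of "E \<inter> D \<times> D" E] by blast

lemma sources_pred_closed:
  "pred_closed D E \<Longrightarrow> D \<subseteq> V \<Longrightarrow> sources D (induced E D) = sources V E \<inter> D"
  unfolding sources_def pred_closed_def induced_def by blast

lemma nonsources_pred_closed:
  "pred_closed D E \<Longrightarrow> D \<subseteq> V \<Longrightarrow> nonsources D (induced E D) = nonsources V E \<inter> D"
  unfolding nonsources_def by (auto simp: sources_pred_closed)

lemma pred_closed_component: "E \<subseteq> V \<times> V \<Longrightarrow> pred_closed (component V E x) E"
  unfolding pred_closed_def component_def und_def
  by (auto intro: rtrancl_into_rtrancl)

lemma reach_subset_component:
  assumes "E \<subseteq> V \<times> V" "y \<in> component V E x"
  shows "reach E y \<subseteq> component V E x"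
proof
  fix z assume "z \<in> reach E y"
  then have "(y, z) \<in> E\<^sup>*"
    unfolding reach_def by simp
  then show "z \<in> component V E x"
  proof (induction rule: rtrancl_induct)
    case base
    then show ?case using assms(2) .
  next
    case (step z w)
    then have "(z, w) \<in> und V E"
      using assms(1) unfolding und_def by auto
    with step.IH show ?case
      unfolding component_def by (meson Image_singleton_iff rtrancl_into_rtrancl)
  qed
qed

lemma pred_closed_unreachable: "E \<subseteq> V \<times> V \<Longrightarrow> pred_closed (V - reach E s) E"
  unfolding pred_closed_def reach_def by (auto intro: rtrancl_into_rtrancl)

lemma source_in_reach: "t \<in> sources V E \<Longrightarrow> t \<in> reach E s \<Longrightarrow> t = s"
  unfolding sources_def reach_def by (auto elim: rtranclE)

lemma sources_unreachable:
  "s \<in> sources V E \<Longrightarrow> sources V E \<inter> (V - reach E s) = sources V E - {s}"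
  using source_in_reach[of _ V E s] by (auto simp: reach_def sources_def)

lemma dag_induced: "dag V E \<Longrightarrow> D \<subseteq> V \<Longrightarrow> dag D (induced E D)"
  unfolding dag_def induced_def by (auto intro: acyclic_subset finite_subset)

lemma finite_sources: "dag V E \<Longrightarrow> finite (sources V E)"
  unfolding dag_def sources_def by simp

lemma ex_source_reach:
  assumes "dag V E" "v \<in> V"
  shows "\<exists>s \<in> sources V E. v \<in> reach E s"
proof -
  have "E \<subseteq> V \<times> V" "finite E" "acyclic E"
    using assms(1) finite_subset[of E "V \<times> V"] unfolding dag_def by auto
  then have "wf E"
    by (simp add: finite_acyclic_wf)
  then show ?thesis
    using assms(2)
  proof (induction v rule: wf_induct_rule)
    case (less v)
    show ?case
    proof (cases "v \<in> sources V E")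
      case True
      then show ?thesis unfolding reach_def by auto
    next
      case False
      then obtain u where "(u, v) \<in> E"
        using less.prems unfolding sources_def by auto
      moreover from this obtain s where "s \<in> sources V E" "u \<in> reach E s"
        using less.IH \<open>E \<subseteq> V \<times> V\<close> by blast
      ultimately show ?thesis
        unfolding reach_def by (auto intro: rtrancl_into_rtrancl)
    qed
  qed
qed

section \<open>Contraction maps and contraction graphs\<close>

definition contraction_map :: "'a set \<Rightarrow> ('a \<times> 'a) set \<Rightarrow> ('a \<Rightarrow> 'a) \<Rightarrow> bool" where
  "contraction_map V E f \<longleftrightarrow> (\<forall>v \<in> nonsources V E. f v \<in> sources V E \<and> v \<in> reach E (f v))"

definition contraction_graph :: "'a set \<Rightarrow> ('a \<times> 'a) set \<Rightarrow> ('a \<Rightarrow> 'a) \<Rightarrow> ('a \<times> 'a) set" where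
  "contraction_graph V E f = {(s, s'). s \<in> sources V E \<and> s' \<in> sources V E \<and> s \<noteq> s' \<and>
     (\<exists>v \<in> nonsources V E. v \<in> reach E s \<and> v \<in> reach E s' \<and> f v \<in> {s, s'})}"

lemma contraction_graphI:
  assumes "a \<in> sources V E" "b \<in> sources V E" "a \<noteq> b" "v \<in> nonsources V E"
    "(a, v) \<in> E\<^sup>*" "(b, v) \<in> E\<^sup>*" "f v \<in> {a, b}"
  shows "(a, b) \<in> contraction_graph V E f"
  using assms unfolding contraction_graph_def reach_def by blast

lemma contraction_graphE:
  assumes "(a, b) \<in> contraction_graph V E f"
  obtains v where "a \<in> sources V E" "b \<in> sources V E" "a \<noteq> b" "v \<in> nonsources V E"
    "(a, v) \<in> E\<^sup>*" "(b, v) \<in> E\<^sup>*" "f v \<in> {a, b}"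
  using assms unfolding contraction_graph_def reach_def by blast

lemma contraction_graph_in_contraction_graphs:
  "contraction_map V E f \<Longrightarrow> contraction_graph V E f \<in> contraction_graphs V E"
  unfolding contraction_graphs_def contraction_graph_def contraction_map_def by blast

lemma ex_contraction_map: "dag V E \<Longrightarrow> \<exists>f. contraction_map V E f"
  using bchoice[of "nonsources V E" "\<lambda>v s. s \<in> sources V E \<and> v \<in> reach E s"]
    ex_source_reach[of V E]
  unfolding contraction_map_def nonsources_def by blast

lemma contraction_map_pred_closedD:
  assumes "pred_closed D E" "D \<subseteq> V" "contraction_map D (induced E D) g"
    and "v \<in> nonsources V E" "v \<in> D"
  shows "g v \<in> sources V E \<and> v \<in> reach E (g v)"
proof -
  have "v \<in> nonsources D (induced E D)"
    using nonsources_pred_closed[OF assms(1,2)] assms(4,5) by blast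
  then have "g v \<in> sources D (induced E D)" "(g v, v) \<in> (induced E D)\<^sup>*"
    using assms(3) unfolding contraction_map_def reach_def by auto
  then show ?thesis
    using sources_pred_closed[OF assms(1,2)] rtrancl_induced_subset unfolding reach_def by auto
qed

lemma contraction_map_pred_closed:
  assumes "pred_closed D E" "D \<subseteq> V" "contraction_map V E f"
  shows "contraction_map D (induced E D) f"
  unfolding contraction_map_def
proof
  fix v assume "v \<in> nonsources D (induced E D)"
  then have "v \<in> nonsources V E" "v \<in> D"
    using nonsources_pred_closed[OF assms(1,2)] by auto
  then have "f v \<in> sources V E" "(f v, v) \<in> E\<^sup>*"
    using assms(3) unfolding contraction_map_def reach_def by auto
  with rtrancl_induced_pred_closed[OF _ assms(1) \<open>v \<in> D\<close>]
  show "f v \<in> sources D (induced E D) \<and> v \<in> reach (induced E D) (f v)"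
    using sources_pred_closed[OF assms(1,2)] unfolding reach_def by auto
qed

lemma contraction_map_components:
  assumes "E \<subseteq> V \<times> V" "\<And>C. C \<in> comps V E \<Longrightarrow> contraction_map C (induced E C) (F C)"
  shows "contraction_map V E (\<lambda>v. F (component V E v) v)"
  unfolding contraction_map_def
proof
  fix v assume v: "v \<in> nonsources V E"
  then have "v \<in> V"
    unfolding nonsources_def by simp
  then show "F (component V E v) v \<in> sources V E \<and> v \<in> reach E (F (component V E v) v)"
    using contraction_map_pred_closedD[OF pred_closed_component[OF assms(1)] component_subset
        assms(2)[OF component_in_comps] v component_self] by blast
qed

lemma contraction_map_root:
  assumes "E \<subseteq> V \<times> V" "s \<in> sources V E"
    and "contraction_map (V - reach E s) (induced E (V - reach E s)) f"
  shows "contraction_map V E (\<lambda>v. if v \<in> reach E s then s else f v)"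
  unfolding contraction_map_def
proof
  fix v assume v: "v \<in> nonsources V E"
  show "(if v \<in> reach E s then s else f v) \<in> sources V E \<and>
      v \<in> reach E (if v \<in> reach E s then s else f v)"
  proof (cases "v \<in> reach E s")
    case False
    then have "v \<in> V - reach E s"
      using v unfolding nonsources_def by simp
    with False show ?thesis
      using contraction_map_pred_closedD[OF pred_closed_unreachable[OF assms(1)] _ assms(3) v] by simp
  qed (use assms(2) in simp)
qed

lemma contraction_graph_pred_closed_subset:
  assumes "pred_closed D E" "D \<subseteq> V"
  shows "contraction_graph D (induced E D) f \<subseteq> contraction_graph V E f"
proof (intro subrelI)
  fix a b assume "(a, b) \<in> contraction_graph D (induced E D) f"
  then obtain v where "a \<in> sources D (induced E D)" "b \<in> sources D (induced E D)" "a \<noteq> b"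
      "v \<in> nonsources D (induced E D)" "(a, v) \<in> (induced E D)\<^sup>*" "(b, v) \<in> (induced E D)\<^sup>*"
      "f v \<in> {a, b}"
    by (rule contraction_graphE)
  then show "(a, b) \<in> contraction_graph V E f"
    using sources_pred_closed[OF assms] nonsources_pred_closed[OF assms]
    by (intro contraction_graphI) (auto intro: rtrancl_induced_subset)
qed

lemma contraction_graph_restrict:
  assumes "pred_closed D E" "D \<subseteq> V" "(a, b) \<in> contraction_graph V E f"
    and "\<And>v. v \<in> nonsources V E \<Longrightarrow> v \<in> reach E a \<Longrightarrow> f v \<in> {a, b} \<Longrightarrow> v \<in> D \<and> g v = f v"
  shows "(a, b) \<in> contraction_graph D (induced E D) g"
proof -
  obtain v where v: "a \<in> sources V E" "b \<in> sources V E" "a \<noteq> b" "v \<in> nonsources V E"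
      "(a, v) \<in> E\<^sup>*" "(b, v) \<in> E\<^sup>*" "f v \<in> {a, b}"
    using assms(3) by (rule contraction_graphE)
  then have "v \<in> D" "g v = f v"
    using assms(4) unfolding reach_def by auto
  with v rtrancl_induced_pred_closed[OF _ assms(1)] show ?thesis
    using sources_pred_closed[OF assms(1,2)] nonsources_pred_closed[OF assms(1,2)]
    by (intro contraction_graphI) auto
qed

lemma contraction_graph_und_rtrancl:
  assumes "E \<subseteq> V \<times> V" "(a, b) \<in> contraction_graph V E f"
  shows "(a, b) \<in> (und V E)\<^sup>*"
proof -
  obtain v where "(a, v) \<in> E\<^sup>*" "(b, v) \<in> E\<^sup>*"
    using assms(2) by (rule contraction_graphE)
  moreover have "E\<^sup>* \<subseteq> (und V E)\<^sup>*"
    using assms(1) by (intro rtrancl_mono) (auto simp: und_def)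
  ultimately show ?thesis
    by (meson rtrancl_trans und_rtrancl_sym subsetD)
qed

text \<open>Map every vertex to a source reaching it (a non-source x to f x).  An arc (x, y) then
  becomes a loop or an edge of the contraction graph witnessed by y.\<close>
lemma gconnected_contraction_graph:
  assumes "dag V E" "gconnected V E" "contraction_map V E f"
  shows "gconnected (sources V E) (contraction_graph V E f)"
proof -
  let ?S = "sources V E" and ?H = "contraction_graph V E f"
  have E: "E \<subseteq> V \<times> V"
    using assms(1) unfolding dag_def by simp
  define g where "g x = (if x \<in> ?S then x else f x)" for x
  have g: "g x \<in> ?S" "(g x, x) \<in> E\<^sup>*" if "x \<in> V" for x
    using that assms(3) unfolding g_def contraction_map_def nonsources_def reach_def by auto
  have arc: "(g x, g y) \<in> (und ?S ?H)\<^sup>*" if "(x, y) \<in> E" for x y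
  proof (cases "g x = g y")
    case False
    have "x \<in> V" "y \<in> V" "y \<notin> ?S"
      using that E unfolding sources_def by auto
    have "g y = f y" "(g x, y) \<in> E\<^sup>*"
      using g(2)[OF \<open>x \<in> V\<close>] that \<open>y \<notin> ?S\<close> unfolding g_def by auto
    then have "(g x, g y) \<in> ?H"
      using g[OF \<open>x \<in> V\<close>] g[OF \<open>y \<in> V\<close>] False \<open>y \<in> V\<close> \<open>y \<notin> ?S\<close>
      by (intro contraction_graphI[where v = y]) (auto simp: nonsources_def)
    then have "(g x, g y) \<in> und ?S ?H"
      using g \<open>x \<in> V\<close> \<open>y \<in> V\<close> unfolding und_def by blast
    then show ?thesis ..
  qed simp
  have path: "(g x, g y) \<in> (und ?S ?H)\<^sup>*" if "(x, y) \<in> (und V E)\<^sup>*" for x y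
    using that
  proof (induction rule: rtrancl_induct)
    case (step y z)
    have "(g y, g z) \<in> (und ?S ?H)\<^sup>*"
      using step.hyps(2) arc[of y z] arc[of z y] und_rtrancl_sym[of "g z" "g y"]
      unfolding und_def by blast
    with step.IH show ?case
      by (rule rtrancl_trans)
  qed simp
  have "?S \<noteq> {}"
    using assms(2) ex_source_reach[OF assms(1)] unfolding gconnected_def by (metis all_not_in_conv empty_iff)
  moreover have "(s, s') \<in> (und ?S ?H)\<^sup>*" if "s \<in> ?S" "s' \<in> ?S" for s s'
    using that path[of s s'] assms(2) unfolding gconnected_def g_def sources_def by auto
  ultimately show ?thesis
    unfolding gconnected_def by blast
qed

section \<open>DAG elimination forests as vertex rankings of contraction graphs\<close>

lemma vertex_ranking_contraction_graph_pred_closed: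
  assumes "pred_closed D E" "D \<subseteq> V"
    and "vertex_ranking (sources V E \<inter> D) (contraction_graph V E f) l k"
  shows "vertex_ranking (sources D (induced E D)) (contraction_graph D (induced E D) f) l k"
  using assms(3) by (rule vertex_ranking_mono)
    (simp_all add: sources_pred_closed[OF assms(1,2)] contraction_graph_pred_closed_subset[OF assms(1,2)])

lemma vertex_ranking_contraction_graph_components:
  assumes "E \<subseteq> V \<times> V"
    and "\<And>C. C \<in> comps V E \<Longrightarrow>
      vertex_ranking (sources C (induced E C)) (contraction_graph C (induced E C) (F C)) (L C) k"
  shows "vertex_ranking (sources V E) (contraction_graph V E (\<lambda>v. F (component V E v) v))
    (\<lambda>x. L (component V E x) x) k"
proof (rule vertex_ranking_components[where H' = "\<lambda>C. contraction_graph C (induced E C) (F C)"])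
  fix C assume C: "C \<in> comps V E"
  then obtain x where "x \<in> V" "C = component V E x"
    by (rule compsE)
  then have "sources V E \<inter> C = sources C (induced E C)"
    using sources_pred_closed[OF pred_closed_component[OF assms(1)] component_subset] by simp
  then show "vertex_ranking (sources V E \<inter> C) (contraction_graph C (induced E C) (F C)) (L C) k"
    using assms(2)[OF C] by simp
next
  fix X x
  assume X: "X \<subseteq> sources V E" "gconnected X (contraction_graph V E (\<lambda>v. F (component V E v) v))"
    "x \<in> X"
  let ?C = "component V E x"
  have "X \<subseteq> ?C"
    using X(2,3) contraction_graph_und_rtrancl[OF assms(1)] by (rule gconnected_subset_component)
  have "x \<in> V"
    using X(1,3) unfolding sources_def by blast
  have "(a, b) \<in> contraction_graph ?C (induced E ?C) (F ?C)"
    if "a \<in> X" "(a, b) \<in> contraction_graph V E (\<lambda>v. F (component V E v) v)" for a b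
  proof (rule contraction_graph_restrict[OF pred_closed_component[OF assms(1)]
        component_subset[OF \<open>x \<in> V\<close>] that(2)])
    fix v assume "v \<in> reach E a"
    then have "v \<in> ?C"
      using reach_subset_component[OF assms(1)] \<open>X \<subseteq> ?C\<close> that(1) by blast
    then show "v \<in> ?C \<and> F ?C v = F (component V E v) v"
      using component_eq[OF \<open>v \<in> ?C\<close>] by simp
  qed
  then have "gconnected X (contraction_graph ?C (induced E ?C) (F ?C))"
    using gconnected_mono[OF X(2)] by blast
  with \<open>X \<subseteq> ?C\<close> show "X \<subseteq> ?C \<and> gconnected X (contraction_graph ?C (induced E ?C) (F ?C))"
    by blast
qed (simp add: sources_def)

lemma vertex_ranking_contraction_graph_root:
  assumes "E \<subseteq> V \<times> V" "s \<in> sources V E"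
    and "vertex_ranking (sources (V - reach E s) (induced E (V - reach E s)))
      (contraction_graph (V - reach E s) (induced E (V - reach E s)) f) l d"
  shows "vertex_ranking (sources V E)
    (contraction_graph V E (\<lambda>v. if v \<in> reach E s then s else f v)) (l(s := d)) (Suc d)"
proof -
  let ?D = "V - reach E s" and ?f = "\<lambda>v. if v \<in> reach E s then s else f v"
  have D: "pred_closed ?D E" "?D \<subseteq> V"
    using pred_closed_unreachable[OF assms(1)] by auto
  have "sources ?D (induced E ?D) = sources V E - {s}"
    using sources_pred_closed[OF D] sources_unreachable[OF assms(2)] by simp
  with assms(3) have "vertex_ranking (sources V E - {s}) (contraction_graph ?D (induced E ?D) f) l d"
    by simp
  then show ?thesis
  proof (rule vertex_ranking_extend)
    fix X assume X: "X \<subseteq> sources V E - {s}" "gconnected X (contraction_graph V E ?f)"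
    have "(a, b) \<in> contraction_graph ?D (induced E ?D) f"
      if "a \<in> X" "b \<in> X" "(a, b) \<in> contraction_graph V E ?f" for a b
    proof (rule contraction_graph_restrict[OF D that(3)])
      fix v assume "v \<in> nonsources V E" "?f v \<in> {a, b}"
      moreover have "s \<notin> {a, b}"
        using X(1) that(1,2) by blast
      ultimately show "v \<in> ?D \<and> f v = ?f v"
        unfolding nonsources_def by auto
    qed
    then show "gconnected X (contraction_graph ?D (induced E ?D) f)"
      using gconnected_mono[OF X(2)] by blast
  qed
qed

lemma dag_elim_depth_components_le:
  assumes "finite V" "V \<noteq> {}" "\<not> gconnected V E"
    and "\<And>C. C \<in> comps V E \<Longrightarrow> \<exists>d\<le>k. dag_elim_depth C (induced E C) d"
  shows "\<exists>d\<le>k. dag_elim_depth V E d"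
proof -
  obtain d where d: "\<And>C. C \<in> comps V E \<Longrightarrow> d C \<le> k \<and> dag_elim_depth C (induced E C) (d C)"
    using assms(4) by metis
  then have "dag_elim_depth V E (Max (d ` comps V E))"
    using dag_elim_depth.disconnected[OF assms(2,3)] by blast
  moreover have "Max (d ` comps V E) \<le> k"
    using d assms(1,2) by (simp add: comps_eq_component_image)
  ultimately show ?thesis
    by blast
qed

lemma vertex_ranking_imp_dag_elim_depth:
  assumes "dag V E" "contraction_map V E f"
    and "vertex_ranking (sources V E) (contraction_graph V E f) l k"
  shows "\<exists>d\<le>k. dag_elim_depth V E d"
  using assms
proof (induction "card V" arbitrary: V E k rule: less_induct)
  case less
  have E: "E \<subseteq> V \<times> V" "finite V"
    using less.prems(1) unfolding dag_def by auto
  have restrict: "\<exists>d\<le>k'. dag_elim_depth D (induced E D) d"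
    if D: "pred_closed D E" "D \<subset> V"
      and ranking: "vertex_ranking (sources V E \<inter> D) (contraction_graph V E f) l k'" for D k'
  proof -
    have "card D < card V"
      using D(2) E(2) by (rule psubset_card_mono[rotated])
    moreover have "dag D (induced E D)" "contraction_map D (induced E D) f"
      "vertex_ranking (sources D (induced E D)) (contraction_graph D (induced E D) f) l k'"
      using D(2) dag_induced[OF less.prems(1)] contraction_map_pred_closed[OF D(1) _ less.prems(2)]
        vertex_ranking_contraction_graph_pred_closed[OF D(1) _ ranking] by auto
    ultimately show ?thesis
      using less.hyps by blast
  qed
  consider "V = {}" | "V \<noteq> {}" "\<not> gconnected V E"
    | "gconnected V E" "\<exists>t. sources V E = {t}" | "gconnected V E" "\<not> (\<exists>t. sources V E = {t})"
    by blast
  then show ?case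
  proof cases
    case 1
    then show ?thesis
      using dag_elim_depth.empty by blast
  next
    case 2
    show ?thesis
    proof (rule dag_elim_depth_components_le[OF E(2) 2])
      fix C assume "C \<in> comps V E"
      then obtain x where "x \<in> V" "C = component V E x"
        by (rule compsE)
      then have "pred_closed C E" "C \<subset> V"
        using pred_closed_component[OF E(1)] component_psubset[OF 2(2)] by simp_all
      moreover have "vertex_ranking (sources V E \<inter> C) (contraction_graph V E f) l k"
        by (rule vertex_ranking_mono[OF less.prems(3)]) auto
      ultimately show "\<exists>d\<le>k. dag_elim_depth C (induced E C) d"
        by (rule restrict)
    qed
  next
    case 3
    then obtain t where "sources V E = {t}"
      by blast
    then have "0 < k"
      using less.prems(3) unfolding vertex_ranking_def by auto
    then show ?thesis
      using dag_elim_depth.one_source[OF 3(1) \<open>sources V E = {t}\<close>] by (intro exI[of _ 1]) simp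
  next
    case 4
    obtain w where w: "w \<in> sources V E" "l w < k"
        "vertex_ranking (sources V E - {w}) (contraction_graph V E f) l (l w)"
      using vertex_ranking_top[OF less.prems(3) gconnected_contraction_graph[OF less.prems(1) 4(1) less.prems(2)]] .
    have "w \<in> V" "w \<in> reach E w"
      using w(1) unfolding sources_def reach_def by auto
    then have "V - reach E w \<subset> V"
      by blast
    then obtain d where "d \<le> l w" "dag_elim_depth (V - reach E w) (induced E (V - reach E w)) d"
      using restrict[OF pred_closed_unreachable[OF E(1)]] w(3) sources_unreachable[OF w(1)] by metis
    then show ?thesis
      using dag_elim_depth.root[OF 4 w(1)] w(2) by (intro exI[of _ "Suc d"]) auto
  qed
qed

lemma dag_elim_depth_imp_vertex_ranking:
  assumes "dag_elim_depth V E d" "dag V E"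
  shows "\<exists>f l. contraction_map V E f \<and> vertex_ranking (sources V E) (contraction_graph V E f) l d"
  using assms
proof (induction rule: dag_elim_depth.induct)
  case (empty V E)
  then have "sources V E = {}" "nonsources V E = {}"
    unfolding sources_def nonsources_def by auto
  then show ?case
    unfolding contraction_map_def vertex_ranking_def gconnected_def by auto
next
  case (disconnected V E d)
  have E: "E \<subseteq> V \<times> V" and "finite V"
    using disconnected.prems unfolding dag_def by simp_all
  have "\<exists>f l. contraction_map C (induced E C) f \<and> vertex_ranking (sources C (induced E C))
      (contraction_graph C (induced E C) f) l (Max (d ` comps V E))"
    if C: "C \<in> comps V E" for C
  proof -
    obtain f l where "contraction_map C (induced E C) f"
        "vertex_ranking (sources C (induced E C)) (contraction_graph C (induced E C) f) l (d C)"
      using disconnected.IH C dag_induced[OF disconnected.prems comps_subset[OF C]] by blast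
    moreover have "d C \<le> Max (d ` comps V E)"
      using C finite_comps[OF \<open>finite V\<close>] by simp
    ultimately show ?thesis
      by (blast intro: vertex_ranking_mono[OF _ subset_refl subset_refl])
  qed
  then obtain F L where "\<And>C. C \<in> comps V E \<Longrightarrow> contraction_map C (induced E C) (F C) \<and>
      vertex_ranking (sources C (induced E C)) (contraction_graph C (induced E C) (F C)) (L C)
        (Max (d ` comps V E))"
    by metis
  then show ?case
    using contraction_map_components[OF E, of F] vertex_ranking_contraction_graph_components[OF E, of F L]
    by blast
next
  case (one_source V E s)
  have "contraction_map V E (\<lambda>_. s)"
    using ex_source_reach[OF one_source.prems] one_source.hyps(2)
    unfolding contraction_map_def nonsources_def by auto
  moreover have "vertex_ranking (sources V E) (contraction_graph V E (\<lambda>_. s)) (\<lambda>_. 0) 1"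
    using one_source.hyps(2) by (intro vertex_ranking_inj) auto
  ultimately show ?case
    by blast
next
  case (root V E s d)
  have E: "E \<subseteq> V \<times> V"
    using root.prems unfolding dag_def by simp
  obtain f l where "contraction_map (V - reach E s) (induced E (V - reach E s)) f"
      "vertex_ranking (sources (V - reach E s) (induced E (V - reach E s)))
        (contraction_graph (V - reach E s) (induced E (V - reach E s)) f) l d"
    using root.IH dag_induced[OF root.prems, of "V - reach E s"] by blast
  then show ?case
    using contraction_map_root[OF E root.hyps(3)] vertex_ranking_contraction_graph_root[OF E root.hyps(3)]
    by blast
qed

lemma dtd_le_vertex_ranking:
  "dag V E \<Longrightarrow> contraction_map V E f \<Longrightarrow>
    vertex_ranking (sources V E) (contraction_graph V E f) l k \<Longrightarrow> dtd V E \<le> k"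
  unfolding dtd_def by (metis vertex_ranking_imp_dag_elim_depth Least_le le_trans)

lemma ex_vertex_ranking_dtd:
  assumes "dag V E"
  shows "\<exists>f l. contraction_map V E f \<and>
    vertex_ranking (sources V E) (contraction_graph V E f) l (dtd V E)"
proof -
  obtain f l where "contraction_map V E f"
      "vertex_ranking (sources V E) (contraction_graph V E f) l (card (sources V E))"
    using ex_contraction_map[OF assms] ex_vertex_ranking[OF finite_sources[OF assms]] by blast
  then have "\<exists>d. dag_elim_depth V E d"
    using vertex_ranking_imp_dag_elim_depth[OF assms] by blast
  then have "dag_elim_depth V E (dtd V E)"
    unfolding dtd_def by (rule LeastI_ex)
  then show ?thesis
    using dag_elim_depth_imp_vertex_ranking assms by blast
qed

theorem mainTheorem6:
  fixes V :: "'a set" and E :: "('a \<times> 'a) set"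
  assumes "dag V E"
  shows "\<exists>H1 \<in> contraction_graphs V E. \<exists>H2 \<in> contraction_graphs V E.
           td (sources V E) H1 \<le> dtd V E \<and> dtd V E \<le> td (sources V E) H2"
proof -
  let ?S = "sources V E"
  obtain f l where f: "contraction_map V E f"
    and l: "vertex_ranking ?S (contraction_graph V E f) l (dtd V E)"
    using ex_vertex_ranking_dtd[OF assms] by blast
  obtain l' where l': "vertex_ranking ?S (contraction_graph V E f) l' (td ?S (contraction_graph V E f))"
    using ex_vertex_ranking_td[OF finite_sources[OF assms]] by blast
  have "td ?S (contraction_graph V E f) \<le> dtd V E"
    using finite_sources[OF assms] l by (rule td_le_vertex_ranking)
  moreover have "dtd V E \<le> td ?S (contraction_graph V E f)"
    using assms f l' by (rule dtd_le_vertex_ranking)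
  ultimately show ?thesis
    using contraction_graph_in_contraction_graphs[OF f] by blast
qed

end
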